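(* In the reduction instance $NTP([a_j]_{j\in A},W)$, every optimal schedule $S^*$ satisfies $B(S^* )\ge W$.
   Context: Reduction instance. Let $N\ge1$, $A=\{1,\dots,N\}$, positive integers $a_1,\dots,a_N$, positive integer $W\le\sum_{j\in A}a_j$. Set $M=N+\sum_{j\in A}a_j+1$, employees $\mathcal E=\{1,\dots,M\}$ (smaller index = more senior). For $k\in A$: $i_k=k+\sum_{j=1}^{k-1}a_j$ (critical employees), $\mathcal E^S_k=\{i: i_k<i\le i_k+a_k\}$ (stable block). Response delays: $r_{i_k}=\sum_{j=1}^{k}a_j$; for $i\in\mathcal E^S_k$, $r_i=\sum_{j=1}^{k-1}a_j$; $r_M=\sum_{j\in A}a_j$. Let $C^*_0=2\sum_j a_j$ and $H=C^*_0-W$. A schedule $S=(s_i,e_i)_{i\in\mathcal E}$ has $s_i\ge0$, $e_i=s_i+r_i$; it is feasible if $s_1\le\dots\le s_M$ and $e_i\le H$ for all $i$. $b_i=|\{j: i<j,\ e_j<e_i\}|$, $B(S)=\sum_i b_i$. A schedule is optimal if it is feasible and minimizes $B(S)$ among feasible schedules. *)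

theory Defs
  imports Complex_Main
begin

definition end_time :: "(nat \<Rightarrow> nat) \<Rightarrow> (nat \<Rightarrow> real) \<Rightarrow> nat \<Rightarrow> real" where
  "end_time r s i = s i + real (r i)"

definition feasible :: "nat \<Rightarrow> (nat \<Rightarrow> nat) \<Rightarrow> real \<Rightarrow> (nat \<Rightarrow> real) \<Rightarrow> bool" where
  "feasible M r H s \<longleftrightarrow>
     (\<forall>i\<in>{1..M}. s i \<ge> 0) \<and>
     (\<forall>i\<in>{1..M}. \<forall>j\<in>{1..M}. i \<le> j \<longrightarrow> s i \<le> s j) \<and>
     (\<forall>i\<in>{1..M}. end_time r s i \<le> H)"

definition blocking :: "nat \<Rightarrow> (nat \<Rightarrow> nat) \<Rightarrow> (nat \<Rightarrow> real) \<Rightarrow> nat \<Rightarrow> nat" where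
  "blocking M r s i = card {j\<in>{1..M}. i < j \<and> end_time r s j < end_time r s i}"

definition total_blocking :: "nat \<Rightarrow> (nat \<Rightarrow> nat) \<Rightarrow> (nat \<Rightarrow> real) \<Rightarrow> nat" where
  "total_blocking M r s = (\<Sum>i\<in>{1..M}. blocking M r s i)"

definition optimal :: "nat \<Rightarrow> (nat \<Rightarrow> nat) \<Rightarrow> real \<Rightarrow> (nat \<Rightarrow> real) \<Rightarrow> bool" where
  "optimal M r H s \<longleftrightarrow> feasible M r H s \<and>
     (\<forall>s'. feasible M r H s' \<longrightarrow> total_blocking M r s \<le> total_blocking M r s')"

definition crit :: "(nat \<Rightarrow> nat) \<Rightarrow> nat \<Rightarrow> nat" where
  "crit a k = k + (\<Sum>j\<in>{1..<k}. a j)"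

end

theory Submission
  imports Defs
begin

text \<open>Let \<open>T = \<Sum>a\<^sub>j\<close>. The critical employee \<open>i\<^sub>k\<close> has response delay \<open>a\<^sub>k\<close> longer than each
of the \<open>a\<^sub>k\<close> employees of its stable block, who start no earlier than \<open>i\<^sub>k\<close>. So either the
start times advance by at least \<open>a\<^sub>k\<close> across the block, or \<open>i\<^sub>k\<close> is blocked by the
whole deficit. Summing over \<open>k\<close>, the advances telescope to at most \<open>s\<^sub>M - s\<^sub>1 \<le> T - W\<close>,
because employee \<open>M\<close> has delay \<open>T\<close> and must end by \<open>H = 2T - W\<close>; hence the total
blocking is at least \<open>T - (T - W) = W\<close>.\<close>

lemma crit_ge_1: "1 \<le> k \<Longrightarrow> 1 \<le> crit a k"
  unfolding crit_def by simp

lemma strict_mono_crit: "strict_mono (crit a)"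
proof (rule strict_monoI)
  fix k l :: nat
  assume "k < l"
  moreover have "(\<Sum>j\<in>{1..<k}. a j) \<le> (\<Sum>j\<in>{1..<l}. a j)"
    using \<open>k < l\<close> by (intro sum_mono2) auto
  ultimately show "crit a k < crit a l"
    unfolding crit_def by simp
qed

lemma sum_atLeastAtMost_eq_atLeastLessThan_plus:
  fixes a :: "nat \<Rightarrow> 'a::comm_monoid_add"
  shows "1 \<le> k \<Longrightarrow> (\<Sum>j\<in>{1..k}. a j) = (\<Sum>j\<in>{1..<k}. a j) + a k"
  using sum.atLeastLessThan_Suc[of 1 k a] by (simp add: atLeastLessThanSuc_atLeastAtMost)

lemma crit_add_block: "1 \<le> k \<Longrightarrow> crit a k + a k = k + (\<Sum>j\<in>{1..k}. a j)"
  using sum_atLeastAtMost_eq_atLeastLessThan_plus[of k a] unfolding crit_def by simp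

lemma crit_Suc: "1 \<le> k \<Longrightarrow> crit a (Suc k) = crit a k + a k + 1"
  unfolding crit_def by (simp add: sum.atLeastLessThan_Suc)

lemma crit_add_block_le:
  assumes "k \<in> {1..N}"
  shows "crit a k + a k \<le> N + (\<Sum>j\<in>{1..N}. a j)"
proof -
  have "(\<Sum>j\<in>{1..k}. a j) \<le> (\<Sum>j\<in>{1..N}. a j)"
    using assms by (intro sum_mono2) auto
  then show ?thesis
    using assms crit_add_block[of k a] by simp
qed

lemma sum_increments_le_range:
  fixes s :: "nat \<Rightarrow> real" and l u :: "nat \<Rightarrow> nat"
  assumes mono: "mono_on {1..M} s"
  shows "\<lbrakk>1 \<le> n; \<And>k. k \<in> {1..<n} \<Longrightarrow> u k \<le> l (Suc k);
      \<And>k. k \<in> {1..n} \<Longrightarrow> l k \<in> {1..M} \<and> u k \<in> {1..M}\<rbrakk>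
    \<Longrightarrow> (\<Sum>k\<in>{1..n}. s (u k) - s (l k)) \<le> s (u n) - s (l 1)"
proof (induction n)
  case 0
  then show ?case by simp
next
  case (Suc n)
  show ?case
  proof (cases "n = 0")
    case True
    then show ?thesis by simp
  next
    case False
    have "s (u n) \<le> s (l (Suc n))"
      using Suc.prems(2)[of n] Suc.prems(3)[of n] Suc.prems(3)[of "Suc n"] False
      by (intro mono_onD[OF mono]) auto
    moreover have "(\<Sum>k\<in>{1..n}. s (u k) - s (l k)) \<le> s (u n) - s (l 1)"
      using False Suc.prems(2,3) by (intro Suc.IH) auto
    ultimately show ?thesis
      by (simp add: sum.cl_ivl_Suc)
  qed
qed

lemma blocking_plus_gap_ge:
  fixes s :: "nat \<Rightarrow> real"
  assumes mono: "mono_on {1..M} s"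
    and "1 \<le> b" and "b + d \<le> M"
    and longer: "\<And>j. j \<in> {b<..b + d} \<Longrightarrow> r j + d \<le> r b"
  shows "real d \<le> real (blocking M r s b) + (s (b + d) - s b)"
proof (cases "real d \<le> s (b + d) - s b")
  case True
  have "s b \<le> s (b + d)"
    using assms by (intro mono_onD[OF mono]) auto
  with True show ?thesis by simp
next
  case False
  have "{b<..b + d} \<subseteq> {j\<in>{1..M}. b < j \<and> end_time r s j < end_time r s b}"
  proof
    fix j
    assume j: "j \<in> {b<..b + d}"
    have "s j \<le> s (b + d)"
      using assms j by (intro mono_onD[OF mono]) auto
    moreover have "real (r j) + real d \<le> real (r b)"
      using longer[OF j] by linarith
    ultimately have "end_time r s j < end_time r s b"
      using False unfolding end_time_def by linarith
    then show "j \<in> {j\<in>{1..M}. b < j \<and> end_time r s j < end_time r s b}"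
      using j \<open>1 \<le> b\<close> \<open>b + d \<le> M\<close> by auto
  qed
  then have "d \<le> blocking M r s b"
    unfolding blocking_def using card_mono[of _ "{b<..b + d}"] by simp
  moreover have "s b \<le> s (b + d)"
    using assms by (intro mono_onD[OF mono]) auto
  ultimately show ?thesis
    by linarith
qed

lemma sum_blocks_le_crit_blocking_plus_span:
  fixes s :: "nat \<Rightarrow> real"
  assumes mono: "mono_on {1..M} s" and "1 \<le> N"
    and block_le: "\<And>k. k \<in> {1..N} \<Longrightarrow> crit a k + a k \<le> M"
    and r_crit: "\<forall>k\<in>{1..N}. r (crit a k) = (\<Sum>j\<in>{1..k}. a j)"
    and r_block: "\<forall>k\<in>{1..N}. \<forall>i. crit a k < i \<and> i \<le> crit a k + a k \<longrightarrow>
            r i = (\<Sum>j\<in>{1..<k}. a j)"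
  shows "real (\<Sum>j\<in>{1..N}. a j) \<le> real (\<Sum>k\<in>{1..N}. blocking M r s (crit a k)) + (s M - s 1)"
proof -
  have per_block: "real (a k) \<le> real (blocking M r s (crit a k)) + (s (crit a k + a k) - s (crit a k))"
    if "k \<in> {1..N}" for k
    using that r_crit r_block block_le[OF that] sum_atLeastAtMost_eq_atLeastLessThan_plus[of k a]
    by (intro blocking_plus_gap_ge[OF mono crit_ge_1]) auto
  have block_range: "crit a k \<in> {1..M} \<and> crit a k + a k \<in> {1..M}" if "k \<in> {1..N}" for k
    using block_le[OF that] crit_ge_1[of k a] that by auto
  have "(\<Sum>k\<in>{1..N}. s (crit a k + a k) - s (crit a k)) \<le> s (crit a N + a N) - s (crit a 1)"
    using \<open>1 \<le> N\<close> block_range crit_Suc[of _ a]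
    by (intro sum_increments_le_range[OF mono]) auto
  also have "\<dots> \<le> s M - s 1"
    using \<open>1 \<le> N\<close> block_le[of N] crit_ge_1 by (auto simp: crit_def intro: mono_onD[OF mono])
  finally have "(\<Sum>k\<in>{1..N}. s (crit a k + a k) - s (crit a k)) \<le> s M - s 1" .
  moreover have "real (\<Sum>j\<in>{1..N}. a j)
      \<le> (\<Sum>k\<in>{1..N}. real (blocking M r s (crit a k)) + (s (crit a k + a k) - s (crit a k)))"
    unfolding of_nat_sum by (intro sum_mono per_block)
  ultimately show ?thesis
    by (simp add: sum.distrib)
qed

lemma sum_blocking_le_total_blocking:
  "I \<subseteq> {1..M} \<Longrightarrow> (\<Sum>i\<in>I. blocking M r s i) \<le> total_blocking M r s"
  unfolding total_blocking_def by (rule sum_mono2) auto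

lemma feasible_mono_on: "feasible M r H s \<Longrightarrow> mono_on {1..M} s"
  unfolding feasible_def by (auto intro: mono_onI)

theorem corollary4:
  fixes N W :: nat and a r :: "nat \<Rightarrow> nat" and s :: "nat \<Rightarrow> real"
  assumes "N \<ge> 1"
    and "\<forall>j\<in>{1..N}. a j > 0"
    and "W > 0" and "W \<le> (\<Sum>j\<in>{1..N}. a j)"
    and "\<forall>k\<in>{1..N}. r (crit a k) = (\<Sum>j\<in>{1..k}. a j)"
    and "\<forall>k\<in>{1..N}. \<forall>i. crit a k < i \<and> i \<le> crit a k + a k \<longrightarrow>
            r i = (\<Sum>j\<in>{1..<k}. a j)"
    and "r (N + (\<Sum>j\<in>{1..N}. a j) + 1) = (\<Sum>j\<in>{1..N}. a j)"
    and "optimal (N + (\<Sum>j\<in>{1..N}. a j) + 1) r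
           (real (2 * (\<Sum>j\<in>{1..N}. a j)) - real W) s"
  shows "total_blocking (N + (\<Sum>j\<in>{1..N}. a j) + 1) r s \<ge> W"
proof -
  define T where "T = (\<Sum>j\<in>{1..N}. a j)"
  define M where "M = N + T + 1"
  have feas: "feasible M r (real (2 * T) - real W) s"
    using assms(8) unfolding optimal_def M_def T_def by simp
  have mono: "mono_on {1..M} s"
    using feas by (rule feasible_mono_on)
  have "s 1 \<ge> 0" "end_time r s M \<le> real (2 * T) - real W"
    using feas unfolding feasible_def M_def by simp_all
  then have span: "s M - s 1 \<le> real T - real W"
    using assms(7) unfolding end_time_def M_def T_def by simp
  have block_le: "crit a k + a k \<le> M" if "k \<in> {1..N}" for k
    using crit_add_block_le[OF that, of a] unfolding M_def T_def by simp
  have "real T \<le> real (\<Sum>k\<in>{1..N}. blocking M r s (crit a k)) + (s M - s 1)"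
    unfolding T_def by (rule sum_blocks_le_crit_blocking_plus_span[OF mono assms(1) block_le assms(5,6)])
  with span have "W \<le> (\<Sum>k\<in>{1..N}. blocking M r s (crit a k))"
    by linarith
  also have "\<dots> = (\<Sum>i\<in>crit a ` {1..N}. blocking M r s i)"
    by (simp add: sum.reindex strict_mono_imp_inj_on[OF strict_mono_crit])
  also have "\<dots> \<le> total_blocking M r s"
    using block_le crit_ge_1 by (intro sum_blocking_le_total_blocking) force
  finally show ?thesis
    unfolding M_def T_def .
qed

end
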